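(* Let $H$ be a finite group, $F$ a free group of rank $2$, $G=H\times F$, and let $A$ be a finite group of automorphisms of $G$ acting trivially on $F$, i.e. each $a\in A$ has the form $a(h,f)=(\alpha(h),f)$ for some automorphism $\alpha$ of $H$; put $n=|A|$. Then for every $z\in X$ in the $n$-valued coset group $X=(G,A)$ and every $y\in X$, the growth function $\xi_y(r)$ of the dynamic $T_z$ does not have exponential growth. In particular, for $H=\langle h\rangle$ cyclic of order $3$ and $A=\langle a\rangle$ with $a(h^i,f)=(h^{-i},f)$, the $2$-valued dynamic $T_z$ with $z=\pi((h,e))$ does not have exponential growth.
   Context: Coset group: for a group $G$ and finite $A\le\operatorname{Aut}(G)$ with $|A|=n$, $X=G/A$ is the set of $A$-orbits, $\pi:G\to X$ the projection, with $\pi(g)*\pi(h)=[\pi(g\,a(h)):a\in A]$, extended elementwise to multi-sets. The dynamic is $T_z(y)=y*z$ with iterates $T_z^r(y)=y*z*\dots*z$ ($r$ factors $z$); its growth function at $y$ is $\xi_y(r)=|\operatorname{Set}(T_z^r(y))|$, where $\operatorname{Set}$ gives the set of distinct elements of a multi-set. A function $f$ has exponential growth if $f(r)\ge c^r$ for some $c>1$ and all sufficiently large $r$. *)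

theory Defs
  imports "HOL-Algebra.Algebra" "HOL-Library.Multiset"
begin

text \<open>Letters of words over a two-element basis: first component selects the
generator (False = first, True = second), second component is the inverse flag.\<close>

definition fw_letter :: "('g, 'c) monoid_scheme \<Rightarrow> 'g \<Rightarrow> 'g \<Rightarrow> bool \<times> bool \<Rightarrow> 'g" where
  "fw_letter F x y l = (let g = (if fst l then y else x) in if snd l then inv\<^bsub>F\<^esub> g else g)"

definition fw_eval :: "('g, 'c) monoid_scheme \<Rightarrow> 'g \<Rightarrow> 'g \<Rightarrow> (bool \<times> bool) list \<Rightarrow> 'g" where
  "fw_eval F x y w = foldr (\<lambda>l acc. fw_letter F x y l \<otimes>\<^bsub>F\<^esub> acc) w \<one>\<^bsub>F\<^esub>"

definition fw_reduced :: "(bool \<times> bool) list \<Rightarrow> bool" where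
  "fw_reduced w = successively (\<lambda>p q. \<not> (fst p = fst q \<and> snd p \<noteq> snd q)) w"

definition free_group_rank2 :: "('g, 'c) monoid_scheme \<Rightarrow> bool" where
  "free_group_rank2 F \<longleftrightarrow> group F \<and>
     (\<exists>x\<in>carrier F. \<exists>y\<in>carrier F. generate F {x, y} = carrier F \<and>
        (\<forall>w. w \<noteq> [] \<and> fw_reduced w \<longrightarrow> fw_eval F x y w \<noteq> \<one>\<^bsub>F\<^esub>))"

definition cg_orbit :: "('g \<Rightarrow> 'g) set \<Rightarrow> 'g \<Rightarrow> 'g set" where
  "cg_orbit A g = (\<lambda>a. a g) ` A"

definition cg_space :: "('g, 'c) monoid_scheme \<Rightarrow> ('g \<Rightarrow> 'g) set \<Rightarrow> 'g set set" where
  "cg_space G A = cg_orbit A ` carrier G"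

definition cg_rep :: "('g, 'c) monoid_scheme \<Rightarrow> ('g \<Rightarrow> 'g) set \<Rightarrow> 'g set \<Rightarrow> 'g" where
  "cg_rep G A x = (SOME g. g \<in> carrier G \<and> cg_orbit A g = x)"

definition cg_mult :: "('g, 'c) monoid_scheme \<Rightarrow> ('g \<Rightarrow> 'g) set \<Rightarrow> 'g set \<Rightarrow> 'g set \<Rightarrow> 'g set multiset" where
  "cg_mult G A x y =
     image_mset (\<lambda>a. cg_orbit A (cg_rep G A x \<otimes>\<^bsub>G\<^esub> a (cg_rep G A y))) (mset_set A)"

definition cg_mult_ms :: "('g, 'c) monoid_scheme \<Rightarrow> ('g \<Rightarrow> 'g) set \<Rightarrow> 'g set multiset \<Rightarrow> 'g set \<Rightarrow> 'g set multiset" where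
  "cg_mult_ms G A M z = \<Sum>\<^sub># (image_mset (\<lambda>x. cg_mult G A x z) M)"

definition cg_iter :: "('g, 'c) monoid_scheme \<Rightarrow> ('g \<Rightarrow> 'g) set \<Rightarrow> 'g set \<Rightarrow> nat \<Rightarrow> 'g set \<Rightarrow> 'g set multiset" where
  "cg_iter G A z r y = ((\<lambda>M. cg_mult_ms G A M z) ^^ r) {#y#}"

definition cg_growth :: "('g, 'c) monoid_scheme \<Rightarrow> ('g \<Rightarrow> 'g) set \<Rightarrow> 'g set \<Rightarrow> 'g set \<Rightarrow> nat \<Rightarrow> nat" where
  "cg_growth G A z y r = card (set_mset (cg_iter G A z r y))"

definition exp_growth :: "(nat \<Rightarrow> nat) \<Rightarrow> bool" where
  "exp_growth f \<longleftrightarrow> (\<exists>c::real. c > 1 \<and> (\<forall>\<^sub>F r in sequentially. c ^ r \<le> real (f r)))"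

end

theory Submission
  imports Defs
begin

text \<open>Since every automorphism in A fixes the F-coordinate, the A-orbit of (h, f) lies in
  the fibre H \<times> {f}, and the product of orbits over f and f' consists of orbits over f f'.
  Writing y and z as orbits over fy and fz, all orbits occurring in the r-th iterate of T_z
  at y lie in the single fibre over fy fz^r, so there are at most 2^|H| of them: the
  growth function is bounded, in particular not exponential.\<close>

lemma bounded_not_exp_growth:
  assumes "\<And>r. f r \<le> B"
  shows "\<not> exp_growth f"
proof
  assume "exp_growth f"
  then obtain c :: real where c: "c > 1" and "\<forall>\<^sub>F r in sequentially. c ^ r \<le> real (f r)"
    unfolding exp_growth_def by blast
  then obtain N where N: "\<And>r. r \<ge> N \<Longrightarrow> c ^ r \<le> real (f r)"
    unfolding eventually_sequentially by blast
  obtain n where n: "real B < c ^ n"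
    using real_arch_pow[OF c] by blast
  have "c ^ n \<le> c ^ max N n"
    using c by (intro power_increasing) auto
  also have "\<dots> \<le> real (f (max N n))"
    using N by simp
  also have "\<dots> \<le> real B"
    using assms by simp
  finally show False
    using n by simp
qed

lemma cg_rep_in_carrier_and_orbit:
  assumes "x \<in> cg_space G A"
  shows "cg_rep G A x \<in> carrier G" and "cg_orbit A (cg_rep G A x) = x"
proof -
  have "\<exists>g. g \<in> carrier G \<and> cg_orbit A g = x"
    using assms unfolding cg_space_def by auto
  then have "cg_rep G A x \<in> carrier G \<and> cg_orbit A (cg_rep G A x) = x"
    unfolding cg_rep_def by (rule someI_ex)
  then show "cg_rep G A x \<in> carrier G" and "cg_orbit A (cg_rep G A x) = x"
    by auto
qed

lemma set_mset_cg_mult: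
  assumes "finite A"
  shows "set_mset (cg_mult G A x w) = (\<lambda>a. cg_orbit A (cg_rep G A x \<otimes>\<^bsub>G\<^esub> a (cg_rep G A w))) ` A"
  using assms by (simp add: cg_mult_def)

lemma set_mset_cg_mult_ms:
  "set_mset (cg_mult_ms G A M z) = (\<Union>x\<in>set_mset M. set_mset (cg_mult G A x z))"
  by (simp add: cg_mult_ms_def)

lemma cg_iter_0: "cg_iter G A z 0 y = {#y#}"
  by (simp add: cg_iter_def)

lemma cg_iter_Suc: "cg_iter G A z (Suc r) y = cg_mult_ms G A (cg_iter G A z r y) z"
  by (simp add: cg_iter_def)

locale fibrewise_action =
  H: monoid H + F: monoid F
  for H :: "('h, 'c) monoid_scheme" and F :: "('f, 'd) monoid_scheme" +
  fixes A :: "('h \<times> 'f \<Rightarrow> 'h \<times> 'f) set"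
  assumes finite_A: "finite A"
    and A_nonempty: "A \<noteq> {}"
    and action_in_fibre: "\<lbrakk>a \<in> A; h \<in> carrier H; f \<in> carrier F\<rbrakk> \<Longrightarrow> a (h, f) \<in> carrier H \<times> {f}"
begin

abbreviation G :: "('h \<times> 'f) monoid" where "G \<equiv> H \<times>\<times> F"

definition orbits_over :: "'f \<Rightarrow> ('h \<times> 'f) set set" where
  "orbits_over f = {x \<in> cg_space G A. x \<subseteq> carrier H \<times> {f}}"

lemma orbit_subset_fibre:
  assumes "h \<in> carrier H" "f \<in> carrier F"
  shows "cg_orbit A (h, f) \<subseteq> carrier H \<times> {f}"
  using action_in_fibre assms unfolding cg_orbit_def by blast

lemma orbit_in_orbits_over:
  assumes "h \<in> carrier H" "f \<in> carrier F"
  shows "cg_orbit A (h, f) \<in> orbits_over f"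
  using assms orbit_subset_fibre unfolding orbits_over_def cg_space_def by auto

lemma cg_rep_orbits_over:
  assumes "x \<in> orbits_over f"
  obtains h where "h \<in> carrier H" "f \<in> carrier F" "cg_rep G A x = (h, f)"
proof -
  obtain h f' where rep: "cg_rep G A x = (h, f')"
    by fastforce
  have x: "x \<in> cg_space G A" "x \<subseteq> carrier H \<times> {f}"
    using assms unfolding orbits_over_def by auto
  have carr: "h \<in> carrier H" "f' \<in> carrier F"
    using cg_rep_in_carrier_and_orbit(1)[OF x(1)] rep by auto
  have "cg_orbit A (h, f') = x"
    using cg_rep_in_carrier_and_orbit(2)[OF x(1)] rep by simp
  moreover have "cg_orbit A (h, f') \<noteq> {}"
    using A_nonempty unfolding cg_orbit_def by simp
  ultimately have "f' = f"
    using orbit_subset_fibre[OF carr] x(2) by blast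
  then show thesis
    using that carr rep by simp
qed

lemma cg_space_orbits_over:
  assumes "x \<in> cg_space G A"
  obtains f where "x \<in> orbits_over f"
proof -
  obtain h f where "cg_rep G A x = (h, f)"
    by fastforce
  then have "h \<in> carrier H" "f \<in> carrier F" "x = cg_orbit A (h, f)"
    using cg_rep_in_carrier_and_orbit[OF assms] by auto
  then show thesis
    using that orbit_in_orbits_over by blast
qed

lemma cg_mult_orbits_over:
  assumes "x \<in> orbits_over f" "w \<in> orbits_over f'"
  shows "set_mset (cg_mult G A x w) \<subseteq> orbits_over (f \<otimes>\<^bsub>F\<^esub> f')"
proof
  fix v
  assume "v \<in> set_mset (cg_mult G A x w)"
  then obtain a where a: "a \<in> A" and v: "v = cg_orbit A (cg_rep G A x \<otimes>\<^bsub>G\<^esub> a (cg_rep G A w))"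
    by (auto simp: set_mset_cg_mult[OF finite_A])
  obtain h where h: "h \<in> carrier H" "f \<in> carrier F" "cg_rep G A x = (h, f)"
    using cg_rep_orbits_over[OF assms(1)] .
  obtain k where k: "k \<in> carrier H" "f' \<in> carrier F" "cg_rep G A w = (k, f')"
    using cg_rep_orbits_over[OF assms(2)] .
  obtain k' where k': "k' \<in> carrier H" "a (k, f') = (k', f')"
    using action_in_fibre[OF a k(1,2)] by auto
  have "v = cg_orbit A (h \<otimes>\<^bsub>H\<^esub> k', f \<otimes>\<^bsub>F\<^esub> f')"
    using v h(3) k(3) k'(2) by simp
  then show "v \<in> orbits_over (f \<otimes>\<^bsub>F\<^esub> f')"
    using orbit_in_orbits_over h k k' by simp
qed

lemma cg_iter_orbits_over:
  assumes y: "y \<in> orbits_over f\<^sub>y" and z: "z \<in> orbits_over f\<^sub>z"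
  shows "set_mset (cg_iter G A z r y) \<subseteq> orbits_over (f\<^sub>y \<otimes>\<^bsub>F\<^esub> f\<^sub>z [^]\<^bsub>F\<^esub> r)"
proof (induction r)
  case 0
  have "f\<^sub>y \<in> carrier F"
    using cg_rep_orbits_over[OF y] by blast
  then show ?case
    using y by (simp add: cg_iter_0)
next
  case (Suc r)
  have carr: "f\<^sub>y \<in> carrier F" "f\<^sub>z \<in> carrier F"
    using cg_rep_orbits_over[OF y] cg_rep_orbits_over[OF z] by blast+
  have "(f\<^sub>y \<otimes>\<^bsub>F\<^esub> f\<^sub>z [^]\<^bsub>F\<^esub> r) \<otimes>\<^bsub>F\<^esub> f\<^sub>z = f\<^sub>y \<otimes>\<^bsub>F\<^esub> f\<^sub>z [^]\<^bsub>F\<^esub> Suc r"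
    using carr by (simp add: F.m_assoc)
  then show ?case
    using Suc cg_mult_orbits_over[OF _ z]
    by (fastforce simp: cg_iter_Suc set_mset_cg_mult_ms)
qed

lemma card_orbits_over:
  assumes "finite (carrier H)"
  shows "card (orbits_over f) \<le> 2 ^ card (carrier H)"
proof -
  have "card (orbits_over f) \<le> card (Pow (carrier H \<times> {f}))"
    using assms by (intro card_mono) (auto simp: orbits_over_def)
  also have "\<dots> = 2 ^ card (carrier H)"
    using assms by (simp add: card_Pow card_cartesian_product)
  finally show ?thesis .
qed

lemma cg_growth_le:
  assumes "finite (carrier H)" "z \<in> cg_space G A" "y \<in> cg_space G A"
  shows "cg_growth G A z y r \<le> 2 ^ card (carrier H)"
proof -
  obtain f\<^sub>y f\<^sub>z where "y \<in> orbits_over f\<^sub>y" "z \<in> orbits_over f\<^sub>z"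
    using cg_space_orbits_over assms(2,3) by metis
  then have "set_mset (cg_iter G A z r y) \<subseteq> orbits_over (f\<^sub>y \<otimes>\<^bsub>F\<^esub> f\<^sub>z [^]\<^bsub>F\<^esub> r)"
    by (rule cg_iter_orbits_over)
  then have "cg_growth G A z y r \<le> card (orbits_over (f\<^sub>y \<otimes>\<^bsub>F\<^esub> f\<^sub>z [^]\<^bsub>F\<^esub> r))"
    unfolding cg_growth_def using assms(1)
    by (intro card_mono) (auto simp: orbits_over_def intro: finite_subset)
  also have "\<dots> \<le> 2 ^ card (carrier H)"
    using assms(1) by (rule card_orbits_over)
  finally show ?thesis .
qed

lemma cg_growth_not_exp_growth:
  assumes "finite (carrier H)" "z \<in> cg_space G A" "y \<in> cg_space G A"
  shows "\<not> exp_growth (cg_growth G A z y)"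
  using bounded_not_exp_growth cg_growth_le[OF assms] by blast

end

theorem mainTheorem9:
  fixes H :: "('h, 'c) monoid_scheme" and F :: "('f, 'd) monoid_scheme"
    and A :: "('h \<times> 'f \<Rightarrow> 'h \<times> 'f) set"
  assumes H: "group H" "finite (carrier H)"
    and F: "free_group_rank2 F"
    and A_sub: "subgroup A (AutoGroup (H \<times>\<times> F))"
    and A_fin: "finite A"
    and A_triv: "\<forall>a\<in>A. \<exists>\<alpha>\<in>auto H. \<forall>h\<in>carrier H. \<forall>f\<in>carrier F. a (h, f) = (\<alpha> h, f)"
  shows "(\<forall>z\<in>cg_space (H \<times>\<times> F) A. \<forall>y\<in>cg_space (H \<times>\<times> F) A.
            \<not> exp_growth (cg_growth (H \<times>\<times> F) A z y))
       \<and> (let H3 = integer_mod_group 3;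
              A3 = {(\<lambda>g\<in>carrier (H3 \<times>\<times> F). g),
                    (\<lambda>g\<in>carrier (H3 \<times>\<times> F). ((- fst g) mod 3, snd g))};
              z3 = cg_orbit A3 (1, \<one>\<^bsub>F\<^esub>)
          in \<forall>y\<in>cg_space (H3 \<times>\<times> F) A3. \<not> exp_growth (cg_growth (H3 \<times>\<times> F) A3 z3 y))"
proof -
  have F_monoid: "monoid F"
    using F unfolding free_group_rank2_def by (blast intro: group.is_monoid)
  have "a (h, f) \<in> carrier H \<times> {f}" if "a \<in> A" "h \<in> carrier H" "f \<in> carrier F" for a h f
  proof -
    from bspec[OF A_triv that(1)] obtain \<alpha>
      where "\<alpha> \<in> auto H" and "\<forall>h\<in>carrier H. \<forall>f\<in>carrier F. a (h, f) = (\<alpha> h, f)" ..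
    then show ?thesis
      using that(2,3) by (auto simp: auto_def hom_in_carrier)
  qed
  then interpret fibrewise_action H F A
    using group.is_monoid[OF H(1)] F_monoid A_fin subgroup.one_closed[OF A_sub]
    by (intro fibrewise_action.intro fibrewise_action_axioms.intro) auto
  have general: "\<forall>z\<in>cg_space (H \<times>\<times> F) A. \<forall>y\<in>cg_space (H \<times>\<times> F) A.
      \<not> exp_growth (cg_growth (H \<times>\<times> F) A z y)"
    using cg_growth_not_exp_growth H(2) by blast
  let ?H3 = "integer_mod_group 3"
  let ?A3 = "{(\<lambda>g\<in>carrier (?H3 \<times>\<times> F). g), (\<lambda>g\<in>carrier (?H3 \<times>\<times> F). ((- fst g) mod 3, snd g))}"
  have carrier_H3: "carrier ?H3 = {0..<3}"
    by (simp add: carrier_integer_mod_group)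
  interpret H3: fibrewise_action ?H3 F ?A3
    using F_monoid group.is_monoid[OF group_integer_mod_group]
    by (intro fibrewise_action.intro fibrewise_action_axioms.intro) (auto simp: carrier_H3)
  have "cg_orbit ?A3 (1, \<one>\<^bsub>F\<^esub>) \<in> cg_space (?H3 \<times>\<times> F) ?A3"
    unfolding cg_space_def by (intro imageI) (simp add: carrier_H3 monoid.one_closed[OF F_monoid])
  then show ?thesis
    using general H3.cg_growth_not_exp_growth carrier_H3 by (simp add: Let_def)
qed
end
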